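(* Let $\mathbf{A}$ be a 4-dimensional cyclic Leibniz algebra over $\mathbb{C}$. Then $\mathbf{A}$ is isomorphic to a Leibniz algebra with basis $\{a,a^2,a^3,a^4\}$, where $aa^i=a^{i+1}$ for $1\le i\le 3$, $a^iv=0$ for $i\ge2$ and all $v$, and $aa^4$ is given by one and only one of the following: (1) $aa^4=0$; (2) $aa^4=a^4$; (3) $aa^4=a^3+\alpha_4a^4$ with $\alpha_4\in\mathbb{C}/\sim$, where $\alpha\sim\alpha'$ iff $\alpha'=\pm\alpha$; (4) $aa^4=a^2+\alpha_3a^3+\alpha_4a^4$ with $(\alpha_3,\alpha_4)\in\mathbb{C}^2/\sim$, where $(\alpha,\beta)\sim(\alpha',\beta')$ iff $(\alpha',\beta')\in\{(\alpha,\beta),(\omega^2\alpha,\omega\beta),(\omega\alpha,\omega^2\beta)\}$ with $\omega=e^{2\pi i/3}$. Here "one and only one" means that algebras from different cases are non-isomorphic, and within case (3) (resp. (4)) two parameter values give isomorphic algebras iff they are equivalent under the stated relation $\sim$.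
   Context: A (left) Leibniz algebra is a vector space with a bilinear product such that $x(yz)=(xy)z+y(xz)$ for all $x,y,z$. A cyclic Leibniz algebra is a Leibniz algebra generated by a single element. For an element $x$ set $x^1=x$ and $x^{j+1}=x\,x^j$. *)

theory Defs
  imports "HOL-Analysis.Analysis"
begin

definition is_algebra :: "(complex \<Rightarrow> 'v::ab_group_add \<Rightarrow> 'v) \<Rightarrow> ('v \<Rightarrow> 'v \<Rightarrow> 'v) \<Rightarrow> bool" where
  "is_algebra smul m \<longleftrightarrow> vector_space smul
     \<and> (\<forall>x. Vector_Spaces.linear smul smul (m x))
     \<and> (\<forall>y. Vector_Spaces.linear smul smul (\<lambda>x. m x y))"

definition leibniz :: "('v::ab_group_add \<Rightarrow> 'v \<Rightarrow> 'v) \<Rightarrow> bool" where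
  "leibniz m \<longleftrightarrow> (\<forall>x y z. m x (m y z) = m (m x y) z + m y (m x z))"

definition subalgebra :: "(complex \<Rightarrow> 'v::ab_group_add \<Rightarrow> 'v) \<Rightarrow> ('v \<Rightarrow> 'v \<Rightarrow> 'v) \<Rightarrow> 'v set \<Rightarrow> bool" where
  "subalgebra smul m S \<longleftrightarrow> module.subspace smul S \<and> (\<forall>x\<in>S. \<forall>y\<in>S. m x y \<in> S)"

definition cyclic :: "(complex \<Rightarrow> 'v::ab_group_add \<Rightarrow> 'v) \<Rightarrow> ('v \<Rightarrow> 'v \<Rightarrow> 'v) \<Rightarrow> bool" where
  "cyclic smul m \<longleftrightarrow> (\<exists>a. \<forall>S. subalgebra smul m S \<and> a \<in> S \<longrightarrow> S = UNIV)"

definition alg_iso :: "(complex \<Rightarrow> 'v::ab_group_add \<Rightarrow> 'v) \<Rightarrow> ('v \<Rightarrow> 'v \<Rightarrow> 'v)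
   \<Rightarrow> (complex \<Rightarrow> 'w::ab_group_add \<Rightarrow> 'w) \<Rightarrow> ('w \<Rightarrow> 'w \<Rightarrow> 'w) \<Rightarrow> bool" where
  "alg_iso s1 m1 s2 m2 \<longleftrightarrow> (\<exists>f. Vector_Spaces.linear s1 s2 f \<and> bij f \<and>
       (\<forall>x y. f (m1 x y) = m2 (f x) (f y)))"

text \<open>Basis vectors e1,...,e4 of \<complex>^4; e_i plays the role of a^i.\<close>
definition e :: "4 \<Rightarrow> complex^4" where "e i = axis i 1"

text \<open>The model algebra on \<complex>^4 with basis a = e 1, a^2 = e 2, a^3 = e 3, a^4 = e 4,
  where a a^i = a^(i+1) for i \<le> 3, a^i v = 0 for i \<ge> 2, and a a^4 = c.\<close>
definition model :: "complex^4 \<Rightarrow> complex^4 \<Rightarrow> complex^4 \<Rightarrow> complex^4" where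
  "model c x y = (x$1) *s ((y$1) *s e 2 + (y$2) *s e 3 + (y$3) *s e 4 + (y$4) *s c)"

abbreviation (input) sc4 :: "complex \<Rightarrow> complex^4 \<Rightarrow> complex^4" where
  "sc4 \<equiv> (\<lambda>c x. c *s x)"

definition M1 :: "complex^4 \<Rightarrow> complex^4 \<Rightarrow> complex^4" where "M1 = model 0"
definition M2 :: "complex^4 \<Rightarrow> complex^4 \<Rightarrow> complex^4" where "M2 = model (e 4)"
definition M3 :: "complex \<Rightarrow> complex^4 \<Rightarrow> complex^4 \<Rightarrow> complex^4" where
  "M3 \<alpha>4 = model (e 3 + \<alpha>4 *s e 4)"
definition M4 :: "complex \<Rightarrow> complex \<Rightarrow> complex^4 \<Rightarrow> complex^4 \<Rightarrow> complex^4" where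
  "M4 \<alpha>3 \<alpha>4 = model (e 2 + \<alpha>3 *s e 3 + \<alpha>4 *s e 4)"

definition \<omega> :: complex where "\<omega> = exp (2 * pi * \<i> / 3)"

end

theory Submission
  imports Defs
begin

text \<open>The left Leibniz identity gives \<open>(x x) z = 0\<close>, and inductively \<open>a\<^sup>k z = 0\<close> for all
  \<open>k \<ge> 2\<close>. Hence the span of the left powers \<open>a, a\<^sup>2, a\<^sup>3, \<dots>\<close> of a generator \<open>a\<close> is a
  subalgebra, so it is everything; in dimension 4 the Krylov vectors \<open>a, a\<^sup>2, a\<^sup>3, a\<^sup>4\<close> of
  \<open>L\<^sub>a\<close> form a basis, and the algebra is determined by
  \<open>a a\<^sup>4 = c\<^sub>1 a + c\<^sub>2 a\<^sup>2 + c\<^sub>3 a\<^sup>3 + c\<^sub>4 a\<^sup>4\<close>, where \<open>c\<^sub>1 = 0\<close>.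
  Two such algebras are isomorphic iff \<open>(c\<^sub>2, c\<^sub>3, c\<^sub>4) = (s\<^sup>3 c'\<^sub>2, s\<^sup>2 c'\<^sub>3, s c'\<^sub>4)\<close> for some
  \<open>s \<noteq> 0\<close>: an isomorphism sends \<open>a\<close> to an element acting on the left as \<open>s L\<^sub>a\<close>, and \<open>c\<close>
  is read off the relation \<open>L\<^sub>a\<^sup>4 = c\<^sub>2 L\<^sub>a + c\<^sub>3 L\<^sub>a\<^sup>2 + c\<^sub>4 L\<^sub>a\<^sup>3\<close>; conversely \<open>a \<mapsto> s a\<close>
  realises every such rescaling. Normalising the first nonzero coefficient to 1 leaves only
  the rescalings by square and cube roots of unity.\<close>

lemma e_nth [simp]: "e i $ j = (if j = i then 1 else 0)"
  by (simp add: e_def axis_def)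

lemma model_nth [simp]:
  "model c x y $ 1 = x$1 * (y$4 * c$1)"
  "model c x y $ 2 = x$1 * (y$1 + y$4 * c$2)"
  "model c x y $ 3 = x$1 * (y$2 + y$4 * c$3)"
  "model c x y $ 4 = x$1 * (y$3 + y$4 * c$4)"
  by (simp_all add: model_def algebra_simps)

lemma alg_iso_sym:
  assumes "alg_iso s1 m1 s2 m2"
  shows "alg_iso s2 m2 s1 m1"
proof -
  obtain f where lin: "Vector_Spaces.linear s1 s2 f" and bij: "bij f"
    and hom: "\<And>x y. f (m1 x y) = m2 (f x) (f y)"
    using assms unfolding alg_iso_def by blast
  interpret f: Vector_Spaces.linear s1 s2 f by (fact lin)
  have inv_eq: "inv f y = x \<longleftrightarrow> f x = y" for x y
    using bij by (metis bij_inv_eq_iff)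
  have "Vector_Spaces.linear s2 s1 (inv f)"
    using lin unfolding Vector_Spaces.linear_iff
    by (simp add: inv_eq f.add f.scale bij bij_is_surj surj_f_inv_f)
  moreover have "inv f (m2 x y) = m1 (inv f x) (inv f y)" for x y
    using bij hom by (metis bij_inv_eq_iff bij_is_surj surj_f_inv_f)
  ultimately show ?thesis
    using bij by (auto simp: alg_iso_def bij_imp_bij_inv)
qed

lemma alg_iso_trans:
  "alg_iso s1 m1 s2 m2 \<Longrightarrow> alg_iso s2 m2 s3 m3 \<Longrightarrow> alg_iso s1 m1 s3 m3"
  unfolding alg_iso_def by (metis Vector_Spaces.linear_compose bij_comp comp_apply)

section \<open>Krylov bases\<close>

definition krylov :: "('v \<Rightarrow> 'v) \<Rightarrow> 'v \<Rightarrow> nat \<Rightarrow> 'v set" where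
  "krylov T a n = (\<lambda>k. (T ^^ k) a) ` {..<n}"

context vector_space
begin

lemma span_invariant:
  assumes "Vector_Spaces.linear scale scale T" and "T ` B \<subseteq> span B" and "x \<in> span B"
  shows "T x \<in> span B"
  using assms(3)
proof (induction rule: span_induct)
  case base
  have "T (x + y) = T x + T y" "T (c *s x) = c *s T x" for x y c
    using assms(1) by (simp_all add: Vector_Spaces.linear_iff)
  moreover from this(2)[of 0 0] have "T 0 = 0" by simp
  ultimately show ?case
    by (auto simp: subspace_def span_zero span_add span_scale)
next
  case (step x)
  then show ?case using assms(2) by blast
qed

lemma iterates_in_span_krylov:
  assumes lin: "Vector_Spaces.linear scale scale T" and closed: "(T ^^ n) a \<in> span (krylov T a n)"
  shows "(T ^^ j) a \<in> span (krylov T a n)"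
proof (induction j)
  case 0
  show ?case
    using closed by (cases n) (auto simp: krylov_def intro!: span_base image_eqI[where x = 0])
next
  case (Suc j)
  have "T ` krylov T a n \<subseteq> span (krylov T a n)"
  proof
    fix y assume "y \<in> T ` krylov T a n"
    then obtain k where k: "k < n" "y = (T ^^ Suc k) a" by (auto simp: krylov_def)
    show "y \<in> span (krylov T a n)"
    proof (cases "Suc k = n")
      case True
      then show ?thesis using closed k by simp
    next
      case False
      then have "Suc k < n" using k by simp
      then show ?thesis
        using k by (auto simp: krylov_def simp del: funpow.simps intro!: span_base)
    qed
  qed
  then show ?case
    using span_invariant[OF lin _ Suc] by simp
qed

lemma independent_krylov:
  assumes "\<And>j. j < n \<Longrightarrow> (T ^^ j) a \<notin> span (krylov T a j)"
  shows "independent (krylov T a n) \<and> card (krylov T a n) = n"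
  using assms
proof (induction n)
  case 0
  show ?case by (simp add: krylov_def independent_empty)
next
  case (Suc n)
  have new: "(T ^^ n) a \<notin> span (krylov T a n)" using Suc.prems by simp
  then have "(T ^^ n) a \<notin> krylov T a n" using span_base by blast
  moreover have "krylov T a (Suc n) = insert ((T ^^ n) a) (krylov T a n)"
    by (simp add: krylov_def lessThan_Suc)
  ultimately show ?case
    using Suc new by (simp add: independent_insertI krylov_def)
qed

text \<open>\<open>dim\<close> is 0 on infinite-dimensional spaces, hence the hypothesis \<open>n \<noteq> 0\<close>.\<close>
lemma krylov_basis:
  assumes lin: "Vector_Spaces.linear scale scale T"
    and spans: "span (range (\<lambda>k. (T ^^ k) a)) = UNIV"
    and dim: "dim (UNIV :: 'b set) = n" and "n \<noteq> 0"
  shows "independent (krylov T a n)" "card (krylov T a n) = n" "span (krylov T a n) = UNIV"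
proof -
  have full: "span (krylov T a j) = UNIV" if "(T ^^ j) a \<in> span (krylov T a j)" for j
  proof -
    have "range (\<lambda>k. (T ^^ k) a) \<subseteq> span (krylov T a j)"
      using iterates_in_span_krylov[OF lin that] by blast
    then show ?thesis
      using spans span_minimal[OF _ subspace_span] by blast
  qed
  have new: "(T ^^ j) a \<notin> span (krylov T a j)" if "j < n" for j
  proof
    assume "(T ^^ j) a \<in> span (krylov T a j)"
    then have "dim (UNIV :: 'b set) \<le> card (krylov T a j)"
      using full by (intro dim_le_card) (auto simp: krylov_def)
    also have "\<dots> \<le> j"
      unfolding krylov_def using card_image_le[of "{..<j}"] by simp
    finally show False using dim that by simp
  qed
  then show indep: "independent (krylov T a n)" and card: "card (krylov T a n) = n"
    using independent_krylov by blast+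
  obtain B where B: "independent B" "UNIV \<subseteq> span B" "card B = n"
    using basis_exists[of UNIV] dim by auto
  have "(T ^^ n) a \<in> span (krylov T a n)"
  proof (rule ccontr)
    assume "(T ^^ n) a \<notin> span (krylov T a n)"
    then have "independent (krylov T a (Suc n)) \<and> card (krylov T a (Suc n)) = Suc n"
      using new by (intro independent_krylov) (auto simp: less_Suc_eq)
    moreover have "finite B" using B(3) \<open>n \<noteq> 0\<close> card_ge_0_finite by blast
    ultimately show False
      using independent_span_bound[of B "krylov T a (Suc n)"] B by auto
  qed
  then show "span (krylov T a n) = UNIV" by (rule full)
qed

end

lemma linear_bij_if_basis_to_basis:
  assumes lin: "Vector_Spaces.linear s1 s2 f"
    and "module.span s1 B = UNIV"
    and "\<not> module.dependent s2 (f ` B)" and "module.span s2 (f ` B) = UNIV"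
    and "inj_on f B"
  shows "bij f"
proof -
  interpret f: Vector_Spaces.linear s1 s2 f by (fact lin)
  show ?thesis
    using assms f.inj_on_span_independent_image[of B] f.span_image[of B]
    by (simp add: bij_def)
qed

section \<open>Cyclic Leibniz algebras of dimension 4\<close>

locale leibniz_algebra =
  fixes smul :: "complex \<Rightarrow> 'v::ab_group_add \<Rightarrow> 'v" and m :: "'v \<Rightarrow> 'v \<Rightarrow> 'v"
  assumes algebra: "is_algebra smul m" and leibniz_identity: "leibniz m"
begin

sublocale vector_space smul
  using algebra by (simp add: is_algebra_def)

lemma linear_mult_left: "Vector_Spaces.linear smul smul (m x)"
  using algebra by (simp add: is_algebra_def)

lemma
  shows mult_add_left: "m (x + y) z = m x z + m y z"
    and mult_scale_left: "m (smul c x) z = smul c (m x z)"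
    and mult_add_right: "m x (y + z) = m x y + m x z"
    and mult_scale_right: "m x (smul c y) = smul c (m x y)"
  using algebra by (simp_all add: is_algebra_def Vector_Spaces.linear_iff)

lemma mult_zero_left [simp]: "m 0 z = 0" and mult_zero_right [simp]: "m x 0 = 0"
  using mult_scale_left[of 0 0 z] mult_scale_right[of x 0 0] by simp_all

lemma left_power_mult_eq_0: "m ((m a ^^ Suc k) a) z = 0"
proof (induction k arbitrary: z)
  case 0
  show ?case
    using leibniz_identity[unfolded leibniz_def, rule_format, of a a z] by simp
next
  case (Suc k)
  show ?case
    using leibniz_identity[unfolded leibniz_def, rule_format, of a "(m a ^^ Suc k) a" z] Suc
    by simp
qed

lemma subalgebra_span_left_powers: "subalgebra smul m (span (range (\<lambda>k. (m a ^^ k) a)))"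
  (is "subalgebra smul m ?S")
proof -
  have a_closed: "m a y \<in> ?S" if "y \<in> ?S" for y
  proof (rule span_invariant[OF linear_mult_left _ that], safe)
    fix k
    show "m a ((m a ^^ k) a) \<in> ?S"
    proof (rule span_base)
      show "m a ((m a ^^ k) a) \<in> range (\<lambda>k. (m a ^^ k) a)"
        using rangeI[of "\<lambda>k. (m a ^^ k) a" "Suc k"] by simp
    qed
  qed
  have "\<forall>y\<in>?S. m x y \<in> ?S" if "x \<in> ?S" for x
    using that
  proof (induction rule: span_induct)
    case base
    show ?case
      by (auto simp: subspace_def mult_add_left mult_scale_left span_zero span_add span_scale)
  next
    case (step x)
    then obtain k where "x = (m a ^^ k) a" by blast
    then show ?case
      using a_closed left_power_mult_eq_0 span_zero by (cases k) auto
  qed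
  then show ?thesis
    by (simp add: subalgebra_def)
qed

lemma span_left_powers_eq_UNIV:
  assumes "\<forall>S. subalgebra smul m S \<and> a \<in> S \<longrightarrow> S = UNIV"
  shows "span (range (\<lambda>k. (m a ^^ k) a)) = UNIV"
  using assms subalgebra_span_left_powers span_base[of a] by (metis funpow_0 rangeI)

text \<open>Coordinates with respect to \<open>a, a\<^sup>2, a\<^sup>3, a\<^sup>4\<close>, where \<open>a\<^sup>k\<^sup>+\<^sup>1 = (m a ^^ k) a\<close>.\<close>
definition power_coords :: "'v \<Rightarrow> complex^4 \<Rightarrow> 'v" where
  "power_coords a x = smul (x$1) a + smul (x$2) ((m a ^^ 1) a) + smul (x$3) ((m a ^^ 2) a)
     + smul (x$4) ((m a ^^ 3) a)"

lemma linear_power_coords: "Vector_Spaces.linear sc4 smul (power_coords a)"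
  by (simp add: Vector_Spaces.linear_iff vec.vector_space_axioms vector_space_axioms power_coords_def
      scale_left_distrib scale_right_distrib add_ac)

lemma power_coords_model:
  assumes "power_coords a c = (m a ^^ 4) a"
  shows "power_coords a (model c x y) = m (power_coords a x) (power_coords a y)"
proof -
  have annihilate: "m (m a a) z = 0" "m ((m a ^^ 2) a) z = 0" "m ((m a ^^ 3) a) z = 0" for z
    using left_power_mult_eq_0[where a = a and z = z and k = 0]
      left_power_mult_eq_0[where a = a and z = z and k = 1]
      left_power_mult_eq_0[where a = a and z = z and k = 2]
    by (simp_all add: numeral_2_eq_2 numeral_3_eq_3)
  have "m (power_coords a x) (power_coords a y) = smul (x$1) (m a (power_coords a y))"
    by (simp add: power_coords_def mult_add_left mult_scale_left annihilate)
  also have "m a (power_coords a y) = smul (y$1) ((m a ^^ 1) a) + smul (y$2) ((m a ^^ 2) a)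
      + smul (y$3) ((m a ^^ 3) a) + smul (y$4) ((m a ^^ 4) a)"
    by (simp add: power_coords_def mult_add_right mult_scale_right numeral_eq_Suc)
  finally show ?thesis
    by (simp add: assms[symmetric] power_coords_def scale_left_distrib
        scale_right_distrib algebra_simps)
qed

lemma bij_power_coords:
  assumes "\<forall>S. subalgebra smul m S \<and> a \<in> S \<longrightarrow> S = UNIV" and "dim (UNIV :: 'v set) = 4"
  shows "bij (power_coords a)"
proof -
  note basis = krylov_basis[OF linear_mult_left span_left_powers_eq_UNIV[OF assms(1)] assms(2)
      zero_neq_numeral[symmetric]]
  have krylov_eq: "krylov (m a) a 4 = power_coords a ` cart_basis"
  proof -
    have "{..<4::nat} = {0, 1, 2, 3}" and cart: "cart_basis = {e 1, e 2, e 3, e 4 :: complex^4}"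
      by (auto simp: cart_basis_def e_def UNIV_4)
    then show ?thesis
      unfolding cart by (simp add: krylov_def power_coords_def)
  qed
  have "inj_on (power_coords a) cart_basis"
    using basis(2) by (simp add: eq_card_imp_inj_on krylov_eq card_cart_basis finite_cart_basis)
  then show ?thesis
    using basis(1,3) krylov_eq
    by (intro linear_bij_if_basis_to_basis[OF linear_power_coords]) auto
qed

lemma cyclic_dim4_iso_model:
  assumes "cyclic smul m" and "dim (UNIV :: 'v set) = 4"
  shows "\<exists>c. c$1 = 0 \<and> alg_iso sc4 (model c) smul m"
proof -
  obtain a where "\<forall>S. subalgebra smul m S \<and> a \<in> S \<longrightarrow> S = UNIV"
    using assms(1) by (auto simp: cyclic_def)
  then have bij: "bij (power_coords a)"
    using assms(2) by (rule bij_power_coords)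
  then obtain c where c: "power_coords a c = (m a ^^ 4) a"
    by (metis bij_pointE)
  note hom = power_coords_model[OF c]
  text \<open>\<open>c\<^sub>1 a\<^sup>2 = (a a\<^sup>4) a = a\<^sup>5 a = 0\<close>.\<close>
  have "power_coords a (model c c (e 1)) = m ((m a ^^ 4) a) (power_coords a (e 1))"
    by (simp only: hom c)
  also have "\<dots> = 0"
    using left_power_mult_eq_0[where k = 3] by simp
  also have "\<dots> = power_coords a 0"
    by (simp add: power_coords_def)
  finally have "model c c (e 1) = 0"
    using bij by (simp add: bij_is_inj inj_eq)
  then have "c$1 = 0"
    using model_nth(2)[of c c "e 1"] by simp
  moreover have "alg_iso sc4 (model c) smul m"
    using linear_power_coords bij hom by (auto simp: alg_iso_def)
  ultimately show ?thesis
    by blast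
qed

end

section \<open>Isomorphisms between the model algebras\<close>

lemma model_scaling_iso:
  assumes "t \<noteq> 0" and "c$1 = t^4 * c'$1" "c$2 = t^3 * c'$2" "c$3 = t^2 * c'$3" "c$4 = t * c'$4"
  shows "alg_iso sc4 (model c) sc4 (model c')"
proof -
  define d :: "complex^4"
    where "d = (\<chi> i. if i = 1 then t else if i = 2 then t^2 else if i = 3 then t^3 else t^4)"
  have d: "d$1 = t" "d$2 = t^2" "d$3 = t^3" "d$4 = t^4" and "d$i \<noteq> 0" for i
    using \<open>t \<noteq> 0\<close> by (simp_all add: d_def)
  define f where "f x = (\<chi> i. d$i * x$i)" for x :: "complex^4"
  have "Vector_Spaces.linear sc4 sc4 f"
    by (auto simp: Vector_Spaces.linear_iff f_def vec_eq_iff algebra_simps vec.vector_space_axioms)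
  moreover have "bij f"
    by (rule o_bij[of "\<lambda>x. \<chi> i. x$i / d$i"]) (auto simp: f_def fun_eq_iff vec_eq_iff \<open>d$_ \<noteq> 0\<close>)
  moreover have "f (model c x y) = model c' (f x) (f y)" for x y
    using assms(2-) by (simp add: f_def vec_eq_iff forall_4 d algebra_simps eval_nat_numeral)
  ultimately show ?thesis
    unfolding alg_iso_def by blast
qed

lemma model_iso_imp_scaling:
  assumes "alg_iso sc4 (model c) sc4 (model c')" and c1: "c$1 = 0" and c'1: "c'$1 = 0"
  shows "\<exists>s. s \<noteq> 0 \<and> c$2 = s^3 * c'$2 \<and> c$3 = s^2 * c'$3 \<and> c$4 = s * c'$4"
proof -
  obtain f where lin: "Vector_Spaces.linear sc4 sc4 f" and "bij f"
    and hom: "\<And>x y. f (model c x y) = model c' (f x) (f y)"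
    using assms(1) unfolding alg_iso_def by blast
  have f_add: "f (x + y) = f x + f y" and f_scale: "f (k *s x) = k *s f x" for x y k
    using lin by (simp_all add: Vector_Spaces.linear_iff)
  have f_inj: "f x = f y \<longleftrightarrow> x = y" for x y
    using \<open>bij f\<close> by (simp add: bij_is_inj inj_eq)
  define L where "L = model c' (e 1)"
  define s where "s = f (e 1) $ 1"
  text \<open>\<open>f(a)\<close> acts by left multiplication as \<open>s L\<close>, so \<open>f(a\<^sup>k\<^sup>+\<^sup>1) = (s L)\<^sup>k f(a)\<close>.\<close>
  have left_mult_fe1: "model c' (f (e 1)) y = s *s L y" for y
    by (simp add: L_def s_def vec_eq_iff forall_4)
  have e_steps: "model c (e 1) (e 1) = e 2" "model c (e 1) (e 2) = e 3"
    "model c (e 1) (e 3) = e 4" "model c (e 1) (e 4) = c"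
    using c1 by (simp_all add: vec_eq_iff forall_4)
  have f_e: "f (e 2) = s *s L (f (e 1))" "f (e 3) = s *s L (f (e 2))"
    "f (e 4) = s *s L (f (e 3))" "f c = s *s L (f (e 4))"
    using hom[of "e 1" "e 1"] hom[of "e 1" "e 2"] hom[of "e 1" "e 3"] hom[of "e 1" "e 4"]
    by (simp_all only: e_steps left_mult_fe1)
  have "s \<noteq> 0"
  proof
    assume "s = 0"
    then have "f (e 2) = f (e 3)" using f_e by simp
    then have "e 2 $ 2 = e 3 $ 2" by (simp only: f_inj)
    then show False by simp
  qed
  text \<open>\<open>L\<^sup>4 = c'\<^sub>2 L + c'\<^sub>3 L\<^sup>2 + c'\<^sub>4 L\<^sup>3\<close>, rescaled for \<open>s L\<close>.\<close>
  have L_relation: "s *s L (s *s L (s *s L (s *s L u))) =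
      (s^3 * c'$2) *s (s *s L u) + (s^2 * c'$3) *s (s *s L (s *s L u))
      + (s * c'$4) *s (s *s L (s *s L (s *s L u)))" for u
    using c'1 by (simp add: L_def vec_eq_iff forall_4 algebra_simps power2_eq_square power3_eq_cube)
  have "f c = (s^3 * c'$2) *s f (e 2) + (s^2 * c'$3) *s f (e 3) + (s * c'$4) *s f (e 4)"
    using L_relation f_e by simp
  also have "\<dots> = f ((s^3 * c'$2) *s e 2 + (s^2 * c'$3) *s e 3 + (s * c'$4) *s e 4)"
    by (simp only: f_add f_scale)
  finally have "c = (s^3 * c'$2) *s e 2 + (s^2 * c'$3) *s e 3 + (s * c'$4) *s e 4"
    by (simp only: f_inj)
  then show ?thesis
    using \<open>s \<noteq> 0\<close> by (auto simp: vec_eq_iff forall_4)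
qed

lemma alg_iso_model_iff:
  assumes "c$1 = 0" and "c'$1 = 0"
  shows "alg_iso sc4 (model c) sc4 (model c') \<longleftrightarrow>
    (\<exists>s. s \<noteq> 0 \<and> c$2 = s^3 * c'$2 \<and> c$3 = s^2 * c'$3 \<and> c$4 = s * c'$4)"
proof
  assume "alg_iso sc4 (model c) sc4 (model c')"
  then show "\<exists>s. s \<noteq> 0 \<and> c$2 = s^3 * c'$2 \<and> c$3 = s^2 * c'$3 \<and> c$4 = s * c'$4"
    using assms by (rule model_iso_imp_scaling)
next
  assume "\<exists>s. s \<noteq> 0 \<and> c$2 = s^3 * c'$2 \<and> c$3 = s^2 * c'$3 \<and> c$4 = s * c'$4"
  then obtain s where "s \<noteq> 0" "c$2 = s^3 * c'$2" "c$3 = s^2 * c'$3" "c$4 = s * c'$4"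
    by blast
  then show "alg_iso sc4 (model c) sc4 (model c')"
    using assms by (intro model_scaling_iso[of s]) simp_all
qed

lemma M_models:
  "M1 = model 0" "M2 = model (e 4)" "M3 \<alpha>4 = model (e 3 + \<alpha>4 *s e 4)"
  "M4 \<alpha>3 \<alpha>4 = model (e 2 + \<alpha>3 *s e 3 + \<alpha>4 *s e 4)"
  by (simp_all add: M1_def M2_def M3_def M4_def)

lemma model_normal_form:
  assumes "c$1 = 0"
  shows "alg_iso sc4 (model c) sc4 M1 \<or> alg_iso sc4 (model c) sc4 M2
    \<or> (\<exists>\<alpha>4. alg_iso sc4 (model c) sc4 (M3 \<alpha>4))
    \<or> (\<exists>\<alpha>3 \<alpha>4. alg_iso sc4 (model c) sc4 (M4 \<alpha>3 \<alpha>4))"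
proof -
  have iso: "alg_iso sc4 (model c) sc4 (model c')" if "c'$1 = 0" "t \<noteq> 0"
    "c$2 = t^3 * c'$2" "c$3 = t^2 * c'$3" "c$4 = t * c'$4" for c' t
    using that by (intro model_scaling_iso[of t]) (simp_all add: assms)
  show ?thesis
  proof (cases "c$2 = 0")
    case False
    obtain t where "t \<noteq> 0" "c$2 = t^3"
      using exists_complex_root_nonzero[OF False, of 3] by auto
    then have "alg_iso sc4 (model c) sc4 (M4 (c$3 / t^2) (c$4 / t))"
      unfolding M_models by (intro iso[of _ t]) simp_all
    then show ?thesis by blast
  next
    case c2: True
    show ?thesis
    proof (cases "c$3 = 0")
      case False
      obtain t where "t \<noteq> 0" "c$3 = t^2"
        using exists_complex_root_nonzero[OF False, of 2] by auto
      then have "alg_iso sc4 (model c) sc4 (M3 (c$4 / t))"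
        unfolding M_models by (intro iso[of _ t]) (simp_all add: c2)
      then show ?thesis by blast
    next
      case c3: True
      show ?thesis
      proof (cases "c$4 = 0")
        case False
        then have "alg_iso sc4 (model c) sc4 M2"
          unfolding M_models by (intro iso[of _ "c$4"]) (simp_all add: c2 c3)
        then show ?thesis by blast
      next
        case True
        then have "c = 0"
          using assms c2 c3 by (simp add: vec_eq_iff forall_4)
        then have "alg_iso sc4 (model c) sc4 M1"
          unfolding M_models by (intro iso[of _ 1]) simp_all
        then show ?thesis by blast
      qed
    qed
  qed
qed

lemma omega_eq: "\<omega> = Complex (-1/2) (sqrt 3 / 2)"
proof -
  have "\<omega> = cis (2 * pi / 3)"
    by (simp add: \<omega>_def cis_conv_exp mult_ac)
  then show ?thesis
    by (simp add: cis.ctr cos_120 sin_120)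
qed

lemma omega_cube: "\<omega>^3 = 1"
  by (simp add: omega_eq complex_eq_iff power3_eq_cube field_simps)

lemma cube_root_unity_cases:
  assumes "(s::complex)^3 = 1"
  shows "s = 1 \<or> s = \<omega> \<or> s = \<omega>^2"
proof -
  have "\<omega>^2 + \<omega> + 1 = 0"
    by (simp add: omega_eq complex_eq_iff power2_eq_square field_simps)
  then have "(s - 1) * (s - \<omega>) * (s - \<omega>^2) = s^3 - \<omega>^3"
    by (simp add: algebra_simps power2_eq_square power3_eq_cube) algebra
  then show ?thesis
    using assms omega_cube by simp
qed

lemma cube_root_unity_rescale:
  fixes s :: "'a::comm_ring_1"
  assumes "s^3 = 1"
  shows "\<alpha> = s^2 * \<alpha>' \<and> \<beta> = s * \<beta>' \<longleftrightarrow> \<alpha>' = s * \<alpha> \<and> \<beta>' = s^2 * \<beta>"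
proof -
  have "s * s^2 = 1" "s^2 * s = 1"
    using assms by (simp_all add: power3_eq_cube power2_eq_square mult.assoc)
  then show ?thesis
    by (auto simp: mult.assoc[symmetric])
qed

lemma M_non_iso:
  "\<not> alg_iso sc4 M1 sc4 M2" "\<not> alg_iso sc4 M1 sc4 (M3 \<alpha>4)"
  "\<not> alg_iso sc4 M1 sc4 (M4 \<alpha>3 \<alpha>4)" "\<not> alg_iso sc4 M2 sc4 (M3 \<alpha>4)"
  "\<not> alg_iso sc4 M2 sc4 (M4 \<alpha>3 \<alpha>4)" "\<not> alg_iso sc4 (M3 \<beta>4) sc4 (M4 \<alpha>3 \<alpha>4)"
  by (simp_all add: M_models alg_iso_model_iff)

lemma M3_iso_iff: "alg_iso sc4 (M3 \<alpha>) sc4 (M3 \<alpha>') \<longleftrightarrow> \<alpha>' = \<alpha> \<or> \<alpha>' = - \<alpha>"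
proof -
  have "alg_iso sc4 (M3 \<alpha>) sc4 (M3 \<alpha>') \<longleftrightarrow> (\<exists>s. s^2 = 1 \<and> \<alpha> = s * \<alpha>')"
    by (simp add: M_models alg_iso_model_iff) (metis zero_neq_one zero_power2)
  also have "\<dots> \<longleftrightarrow> \<alpha>' = \<alpha> \<or> \<alpha>' = - \<alpha>"
    by (auto simp: power2_eq_1_iff)
  finally show ?thesis .
qed

lemma M4_iso_iff:
  "alg_iso sc4 (M4 \<alpha> \<beta>) sc4 (M4 \<alpha>' \<beta>') \<longleftrightarrow>
    (\<alpha>', \<beta>') \<in> {(\<alpha>, \<beta>), (\<omega>^2 * \<alpha>, \<omega> * \<beta>), (\<omega> * \<alpha>, \<omega>^2 * \<beta>)}"
proof -
  have "alg_iso sc4 (M4 \<alpha> \<beta>) sc4 (M4 \<alpha>' \<beta>') \<longleftrightarrow> (\<exists>s. s^3 = 1 \<and> \<alpha> = s^2 * \<alpha>' \<and> \<beta> = s * \<beta>')"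
    by (simp add: M_models alg_iso_model_iff) (metis zero_neq_one zero_power zero_less_numeral)
  also have "\<dots> \<longleftrightarrow> (\<exists>s. s^3 = 1 \<and> \<alpha>' = s * \<alpha> \<and> \<beta>' = s^2 * \<beta>)"
    by (simp add: cube_root_unity_rescale cong: conj_cong)
  also have "\<dots> \<longleftrightarrow> (\<alpha>', \<beta>') \<in> {(\<alpha>, \<beta>), (\<omega>^2 * \<alpha>, \<omega> * \<beta>), (\<omega> * \<alpha>, \<omega>^2 * \<beta>)}"
  proof -
    have "(\<omega>^2)^3 = (\<omega>^3)^2" "(\<omega>^2)^2 = \<omega>^3 * \<omega>"
      by (simp_all flip: power_mult power_Suc2)
    then have "(\<omega>^2)^3 = 1" "(\<omega>^2)^2 = \<omega>"
      using omega_cube by simp_all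
    then have cube_roots: "(\<exists>s. s^3 = 1 \<and> P s) \<longleftrightarrow> P 1 \<or> P \<omega> \<or> P (\<omega>^2)" for P
      using cube_root_unity_cases omega_cube \<open>(\<omega>^2)^3 = 1\<close> power_one by blast
    show ?thesis
      unfolding cube_roots[of "\<lambda>s. \<alpha>' = s * \<alpha> \<and> \<beta>' = s^2 * \<beta>"] using \<open>(\<omega>^2)^2 = \<omega>\<close> by auto
  qed
  finally show ?thesis .
qed

theorem corollary4p2:
  fixes smul :: "complex \<Rightarrow> 'v::ab_group_add \<Rightarrow> 'v" and m :: "'v \<Rightarrow> 'v \<Rightarrow> 'v"
  assumes "is_algebra smul m" and "leibniz m"
    and "vector_space.dim smul (UNIV :: 'v set) = 4"
    and "cyclic smul m"
  shows "(alg_iso smul m sc4 M1 \<or> alg_iso smul m sc4 M2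
          \<or> (\<exists>\<alpha>4. alg_iso smul m sc4 (M3 \<alpha>4))
          \<or> (\<exists>\<alpha>3 \<alpha>4. alg_iso smul m sc4 (M4 \<alpha>3 \<alpha>4)))
     \<and> \<not> alg_iso sc4 M1 sc4 M2
     \<and> (\<forall>\<alpha>4. \<not> alg_iso sc4 M1 sc4 (M3 \<alpha>4))
     \<and> (\<forall>\<alpha>3 \<alpha>4. \<not> alg_iso sc4 M1 sc4 (M4 \<alpha>3 \<alpha>4))
     \<and> (\<forall>\<alpha>4. \<not> alg_iso sc4 M2 sc4 (M3 \<alpha>4))
     \<and> (\<forall>\<alpha>3 \<alpha>4. \<not> alg_iso sc4 M2 sc4 (M4 \<alpha>3 \<alpha>4))
     \<and> (\<forall>\<beta>4 \<alpha>3 \<alpha>4. \<not> alg_iso sc4 (M3 \<beta>4) sc4 (M4 \<alpha>3 \<alpha>4))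
     \<and> (\<forall>\<alpha> \<alpha>'. alg_iso sc4 (M3 \<alpha>) sc4 (M3 \<alpha>') \<longleftrightarrow> \<alpha>' = \<alpha> \<or> \<alpha>' = - \<alpha>)
     \<and> (\<forall>\<alpha> \<beta> \<alpha>' \<beta>'. alg_iso sc4 (M4 \<alpha> \<beta>) sc4 (M4 \<alpha>' \<beta>') \<longleftrightarrow>
          (\<alpha>', \<beta>') \<in> {(\<alpha>, \<beta>), (\<omega>^2 * \<alpha>, \<omega> * \<beta>), (\<omega> * \<alpha>, \<omega>^2 * \<beta>)})"
proof -
  interpret leibniz_algebra smul m
    using assms(1,2) by unfold_locales
  obtain c where "c$1 = 0" and "alg_iso sc4 (model c) smul m"
    using cyclic_dim4_iso_model assms(3,4) by blast
  then have "alg_iso smul m sc4 M1 \<or> alg_iso smul m sc4 M2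
      \<or> (\<exists>\<alpha>4. alg_iso smul m sc4 (M3 \<alpha>4))
      \<or> (\<exists>\<alpha>3 \<alpha>4. alg_iso smul m sc4 (M4 \<alpha>3 \<alpha>4))"
    using model_normal_form alg_iso_trans[OF alg_iso_sym] by blast
  then show ?thesis
    using M_non_iso M3_iso_iff M4_iso_iff by blast
qed

end
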